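(* For any attacker mixed strategy $\sigma_a$ (a probability distribution over subsets of $C$ of size at most $k_a$), the set function $g(S_d\mid\sigma_a)=\mathbb{E}_{S_a\sim\sigma_a}[f(\emptyset,S_a)-f(S_d,S_a)]$, defined on subsets $S_d\subseteq C$, is monotone and submodular.
   Context: Setting: voters $V$, channels $C$, edge probabilities $p_{uv},q_{uv}\in[0,1]$ (0 for non-edges), known preferences $\theta_v\in\{0,1\}$, and $f(S_d,S_a)=\sum_{v\in V}\theta_v\left(\prod_{u\in S_d}(1-q_{uv})\right)\left(1-\prod_{u\in S_a}(1-p_{uv})\right)$. A set function $h$ is monotone if $h(A\cup\{u\})\ge h(A)$ for all $A,u$, and submodular if $h(B\cup\{u\})-h(B)\le h(A\cup\{u\})-h(A)$ for all $A\subseteq B$ and $u\notin B$. *)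

theory Defs
  imports "HOL-Probability.Probability"
begin

text \<open>Expected number of (preference-1) voters influenced, as in the paper:
  f(S_d,S_a) = sum_v theta_v * prod_{u in S_d}(1 - q_uv) * (1 - prod_{u in S_a}(1 - p_uv)).\<close>
definition f_inf :: "'v set \<Rightarrow> ('c \<Rightarrow> 'v \<Rightarrow> real) \<Rightarrow> ('c \<Rightarrow> 'v \<Rightarrow> real) \<Rightarrow> ('v \<Rightarrow> real)
    \<Rightarrow> 'c set \<Rightarrow> 'c set \<Rightarrow> real" where
  "f_inf V p q \<theta> Sd Sa =
     (\<Sum>v\<in>V. \<theta> v * (\<Prod>u\<in>Sd. 1 - q u v) * (1 - (\<Prod>u\<in>Sa. 1 - p u v)))"

definition g_def_fun :: "'v set \<Rightarrow> ('c \<Rightarrow> 'v \<Rightarrow> real) \<Rightarrow> ('c \<Rightarrow> 'v \<Rightarrow> real) \<Rightarrow> ('v \<Rightarrow> real)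
    \<Rightarrow> 'c set pmf \<Rightarrow> 'c set \<Rightarrow> real" where
  "g_def_fun V p q \<theta> \<sigma> Sd =
     measure_pmf.expectation \<sigma> (\<lambda>Sa. f_inf V p q \<theta> {} Sa - f_inf V p q \<theta> Sd Sa)"

definition monotone_on_subsets :: "'c set \<Rightarrow> ('c set \<Rightarrow> real) \<Rightarrow> bool" where
  "monotone_on_subsets C h \<longleftrightarrow>
     (\<forall>A u. A \<subseteq> C \<and> u \<in> C \<longrightarrow> h (A \<union> {u}) \<ge> h A)"

definition submodular_on_subsets :: "'c set \<Rightarrow> ('c set \<Rightarrow> real) \<Rightarrow> bool" where
  "submodular_on_subsets C h \<longleftrightarrow>
     (\<forall>A B u. A \<subseteq> B \<and> B \<subseteq> C \<and> u \<in> C \<and> u \<notin> B \<longrightarrow>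
        h (B \<union> {u}) - h B \<le> h (A \<union> {u}) - h A)"

end

theory Submission
  imports Defs
begin

text \<open>For a fixed attacker set S_a, the reduction f(\<emptyset>,S_a) - f(S_d,S_a) is a nonnegative
  combination, over the voters v, of the probabilities 1 - \<Prod>u\<in>S_d. (1 - q u v) that v is
  reached by some defending channel.  Each such coverage probability is monotone and submodular,
  since adding a channel u to S_d raises it by q u v \<cdot> \<Prod>u\<in>S_d. (1 - q u v), a quantity that
  shrinks as S_d grows.  Both properties survive nonnegative combinations and taking the
  expectation over S_a.\<close>

lemma monotone_on_subsets_nonneg_combination:
  assumes "\<And>i. i \<in> I \<Longrightarrow> 0 \<le> c i" and "\<And>i. i \<in> I \<Longrightarrow> monotone_on_subsets C (h i)"
  shows "monotone_on_subsets C (\<lambda>A. \<Sum>i\<in>I. c i * h i A)"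
  using assms unfolding monotone_on_subsets_def
  by (auto intro!: sum_mono mult_left_mono)

lemma submodular_on_subsets_nonneg_combination:
  assumes "\<And>i. i \<in> I \<Longrightarrow> 0 \<le> c i" and "\<And>i. i \<in> I \<Longrightarrow> submodular_on_subsets C (h i)"
  shows "submodular_on_subsets C (\<lambda>A. \<Sum>i\<in>I. c i * h i A)"
  unfolding submodular_on_subsets_def
proof (intro allI impI)
  fix A B u assume "A \<subseteq> B \<and> B \<subseteq> C \<and> u \<in> C \<and> u \<notin> B"
  then have "c i * (h i (B \<union> {u}) - h i B) \<le> c i * (h i (A \<union> {u}) - h i A)" if "i \<in> I" for i
    using assms that unfolding submodular_on_subsets_def by (intro mult_left_mono) auto
  then show "(\<Sum>i\<in>I. c i * h i (B \<union> {u})) - (\<Sum>i\<in>I. c i * h i B)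
      \<le> (\<Sum>i\<in>I. c i * h i (A \<union> {u})) - (\<Sum>i\<in>I. c i * h i A)"
    by (simp add: sum_subtractf[symmetric] right_diff_distrib sum_mono)
qed

lemma monotone_on_subsets_expectation:
  fixes \<sigma> :: "'a pmf"
  assumes "\<And>A. integrable \<sigma> (\<lambda>x. h x A)"
    and "\<And>x. x \<in> set_pmf \<sigma> \<Longrightarrow> monotone_on_subsets C (h x)"
  shows "monotone_on_subsets C (\<lambda>A. measure_pmf.expectation \<sigma> (\<lambda>x. h x A))"
  using assms unfolding monotone_on_subsets_def
  by (auto intro!: integral_mono_AE AE_pmfI)

lemma submodular_on_subsets_expectation:
  fixes \<sigma> :: "'a pmf"
  assumes int: "\<And>A. integrable \<sigma> (\<lambda>x. h x A)"
    and "\<And>x. x \<in> set_pmf \<sigma> \<Longrightarrow> submodular_on_subsets C (h x)"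
  shows "submodular_on_subsets C (\<lambda>A. measure_pmf.expectation \<sigma> (\<lambda>x. h x A))"
  unfolding submodular_on_subsets_def
proof (intro allI impI)
  fix A B u assume "A \<subseteq> B \<and> B \<subseteq> C \<and> u \<in> C \<and> u \<notin> B"
  then have "AE x in \<sigma>. h x (B \<union> {u}) - h x B \<le> h x (A \<union> {u}) - h x A"
    using assms(2) unfolding submodular_on_subsets_def by (auto intro!: AE_pmfI)
  then have "measure_pmf.expectation \<sigma> (\<lambda>x. h x (B \<union> {u}) - h x B)
      \<le> measure_pmf.expectation \<sigma> (\<lambda>x. h x (A \<union> {u}) - h x A)"
    by (intro integral_mono_AE) (use int in auto)
  then show "measure_pmf.expectation \<sigma> (\<lambda>x. h x (B \<union> {u})) - measure_pmf.expectation \<sigma> (\<lambda>x. h x B)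
      \<le> measure_pmf.expectation \<sigma> (\<lambda>x. h x (A \<union> {u})) - measure_pmf.expectation \<sigma> (\<lambda>x. h x A)"
    by (simp add: int)
qed

lemma prod_one_minus_antimono:
  fixes q :: "'c \<Rightarrow> real"
  assumes "finite B" "A \<subseteq> B" "\<And>u. 0 \<le> q u \<and> q u \<le> 1"
  shows "(\<Prod>u\<in>B. 1 - q u) \<le> (\<Prod>u\<in>A. 1 - q u)"
proof -
  have "(\<Prod>u\<in>B. 1 - q u) = (\<Prod>u\<in>B - A. 1 - q u) * (\<Prod>u\<in>A. 1 - q u)"
    by (rule prod.subset_diff[OF assms(2,1)])
  also have "\<dots> \<le> 1 * (\<Prod>u\<in>A. 1 - q u)"
    using assms(3) by (intro mult_right_mono prod_le_1 prod_nonneg) auto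
  finally show ?thesis by simp
qed

lemma one_minus_prod_marginal_gain:
  fixes q :: "'c \<Rightarrow> real"
  assumes "finite A" "u \<notin> A"
  shows "(1 - (\<Prod>w\<in>A \<union> {u}. 1 - q w)) - (1 - (\<Prod>w\<in>A. 1 - q w)) = q u * (\<Prod>w\<in>A. 1 - q w)"
  using assms by (simp add: algebra_simps)

lemma monotone_on_subsets_one_minus_prod:
  fixes q :: "'c \<Rightarrow> real"
  assumes "finite C" "\<And>u. 0 \<le> q u \<and> q u \<le> 1"
  shows "monotone_on_subsets C (\<lambda>A. 1 - (\<Prod>w\<in>A. 1 - q w))"
  unfolding monotone_on_subsets_def
proof (intro allI impI)
  fix A u assume "A \<subseteq> C \<and> u \<in> C"
  then have "finite (A \<union> {u})"
    using assms(1) finite_subset by blast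
  from prod_one_minus_antimono[where q = q, OF this Un_upper1 assms(2)]
  show "1 - (\<Prod>w\<in>A. 1 - q w) \<le> 1 - (\<Prod>w\<in>A \<union> {u}. 1 - q w)"
    by linarith
qed

lemma submodular_on_subsets_one_minus_prod:
  fixes q :: "'c \<Rightarrow> real"
  assumes "finite C" "\<And>u. 0 \<le> q u \<and> q u \<le> 1"
  shows "submodular_on_subsets C (\<lambda>A. 1 - (\<Prod>w\<in>A. 1 - q w))"
  unfolding submodular_on_subsets_def
proof (intro allI impI)
  fix A B u assume "A \<subseteq> B \<and> B \<subseteq> C \<and> u \<in> C \<and> u \<notin> B"
  then have AB: "A \<subseteq> B" and BC: "B \<subseteq> C" and "u \<notin> B" "u \<notin> A"
    by auto
  have "finite B"
    using assms(1) BC by (rule finite_subset[rotated])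
  then have "finite A"
    using AB by (rule finite_subset[rotated])
  have "q u * (\<Prod>w\<in>B. 1 - q w) \<le> q u * (\<Prod>w\<in>A. 1 - q w)"
    using prod_one_minus_antimono[where q = q, OF \<open>finite B\<close> AB assms(2)] assms(2)[of u]
    by (intro mult_left_mono) auto
  then show "1 - (\<Prod>w\<in>B \<union> {u}. 1 - q w) - (1 - (\<Prod>w\<in>B. 1 - q w))
      \<le> 1 - (\<Prod>w\<in>A \<union> {u}. 1 - q w) - (1 - (\<Prod>w\<in>A. 1 - q w))"
    unfolding one_minus_prod_marginal_gain[OF \<open>finite A\<close> \<open>u \<notin> A\<close>]
      one_minus_prod_marginal_gain[OF \<open>finite B\<close> \<open>u \<notin> B\<close>] .
qed

lemma f_inf_reduction_eq:
  "f_inf V p q \<theta> {} Sa - f_inf V p q \<theta> Sd Sa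
     = (\<Sum>v\<in>V. (\<theta> v * (1 - (\<Prod>u\<in>Sa. 1 - p u v))) * (1 - (\<Prod>u\<in>Sd. 1 - q u v)))"
  unfolding f_inf_def by (simp add: sum_subtractf[symmetric] algebra_simps)

theorem mainTheorem4:
  fixes V :: "'v set" and C :: "'c set" and p q :: "'c \<Rightarrow> 'v \<Rightarrow> real"
    and \<theta> :: "'v \<Rightarrow> real" and ka :: nat and \<sigma> :: "'c set pmf"
  assumes "finite V" and "finite C"
    and "\<And>u v. 0 \<le> p u v \<and> p u v \<le> 1"
    and "\<And>u v. 0 \<le> q u v \<and> q u v \<le> 1"
    and "\<And>v. v \<in> V \<Longrightarrow> \<theta> v \<in> {0, 1}"
    and "\<And>S. S \<in> set_pmf \<sigma> \<Longrightarrow> S \<subseteq> C \<and> card S \<le> ka"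
  shows "monotone_on_subsets C (g_def_fun V p q \<theta> \<sigma>)
       \<and> submodular_on_subsets C (g_def_fun V p q \<theta> \<sigma>)"
proof -
  define h where "h Sa Sd = (\<Sum>v\<in>V. (\<theta> v * (1 - (\<Prod>u\<in>Sa. 1 - p u v))) * (1 - (\<Prod>u\<in>Sd. 1 - q u v)))"
    for Sa Sd
  have g_eq: "g_def_fun V p q \<theta> \<sigma> = (\<lambda>Sd. measure_pmf.expectation \<sigma> (\<lambda>Sa. h Sa Sd))"
    unfolding g_def_fun_def h_def f_inf_reduction_eq ..
  have "finite (set_pmf \<sigma>)"
    using assms(2,6) by (auto intro: finite_subset[of _ "Pow C"])
  then have int: "integrable \<sigma> (\<lambda>Sa. h Sa Sd)" for Sd
    by (rule integrable_measure_pmf_finite)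
  have weight_nonneg: "0 \<le> \<theta> v * (1 - (\<Prod>u\<in>Sa. 1 - p u v))" if "v \<in> V" for v Sa
    using assms(3) assms(5)[OF that] by (auto intro!: prod_le_1)
  have "monotone_on_subsets C (h Sa)" "submodular_on_subsets C (h Sa)" for Sa
    unfolding h_def using weight_nonneg assms(2,4)
    by (intro monotone_on_subsets_nonneg_combination submodular_on_subsets_nonneg_combination
        monotone_on_subsets_one_minus_prod submodular_on_subsets_one_minus_prod; auto)+
  then show ?thesis
    unfolding g_eq using int
    by (auto intro!: monotone_on_subsets_expectation submodular_on_subsets_expectation)
qed

end
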